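(* Let $f\colon A\to X$ and $g\colon A\to Y$ be morphisms in a pre-Hilbert $*$-category, and suppose there is an extension of $g$ along $f$ (a morphism $e\colon X\to Y$ with $ef=g$). Then: (i) there is a unique extension $h$ of $g$ along $f$ such that $\operatorname{Ker} h\geq (\operatorname{Ran} f)^\perp$; (ii) for this $h$, $(\operatorname{Ran} h)^{\perp\perp} = (\operatorname{Ran} g)^{\perp\perp}$; (iii) $f^*f=g^*g$ if and only if $h$ is partially isometric and $\operatorname{Ker} h\leq (\operatorname{Ran} f)^\perp$; (iv) if $f$ is epic, then $f^*f=g^*g$ if and only if $h$ is isometric; (v) if $f$ and $g$ are both epic, then $f^*f=g^*g$ if and only if $h$ is unitary.
   Context: A $*$-category is a category with a choice of $f^*\colon Y\to X$ for each $f\colon X\to Y$ such that $1^*=1$, $(gf)^*=f^*g^*$, $(f^* )^*=f$; $f$ is an isometry if $f^*f=1$, unitary if it is an invertible isometry, and a partial isometry if $f=ff^*f$. A pre-Hilbert $*$-category is a $*$-category with (R1) a zero object, (R2) orthonormal biproducts of all pairs of objects (biproducts $(X,s_1,r_1,s_2,r_2)$ with $r_k=s_k^*$), (R3) an isometric kernel for every morphism, and (R4) every diagonal $\Delta\colon X\to X\oplus X$ a kernel of some morphism. Subobjects of an object are compared by the usual preorder ($m\le n$ iff $m$ factors through $n$). $\operatorname{Ker} h$ is the subobject represented by a kernel of $h$. The range $\operatorname{Ran} f$ is the smallest subobject of the codomain through which $f$ factors (it exists in a pre-Hilbert $*$-category). For a subobject represented by a monomorphism $m$, its orthogonal complement $(\cdot)^\perp$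 is the subobject represented by a kernel of $m^*$; in particular $(\operatorname{Ran} f)^\perp=\operatorname{Ker} f^*$, and $(\cdot)^{\perp\perp}$ is the complement applied twice. *)

theory Defs
  imports Main
begin

text \<open>A category presented by objects, arrows, domain/codomain, identities and
  composition (Comp g f is g after f, meaningful when Dom g = Cod f), together with
  an involution Star.\<close>

record ('o, 'm) starcat =
  Obj  :: "'o set"
  Arr  :: "'m set"
  Dom  :: "'m \<Rightarrow> 'o"
  Cod  :: "'m \<Rightarrow> 'o"
  Idm  :: "'o \<Rightarrow> 'm"
  Comp :: "'m \<Rightarrow> 'm \<Rightarrow> 'm"
  Star :: "'m \<Rightarrow> 'm"

definition hom :: "('o, 'm) starcat \<Rightarrow> 'o \<Rightarrow> 'o \<Rightarrow> 'm set" where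
  "hom C x y = {f \<in> Arr C. Dom C f = x \<and> Cod C f = y}"

definition is_category :: "('o, 'm) starcat \<Rightarrow> bool" where
  "is_category C \<longleftrightarrow>
     (\<forall>f\<in>Arr C. Dom C f \<in> Obj C \<and> Cod C f \<in> Obj C) \<and>
     (\<forall>x\<in>Obj C. Idm C x \<in> hom C x x) \<and>
     (\<forall>f\<in>Arr C. \<forall>g\<in>Arr C. Dom C g = Cod C f \<longrightarrow> Comp C g f \<in> hom C (Dom C f) (Cod C g)) \<and>
     (\<forall>f\<in>Arr C. \<forall>g\<in>Arr C. \<forall>h\<in>Arr C. Dom C g = Cod C f \<longrightarrow> Dom C h = Cod C g \<longrightarrow>
         Comp C h (Comp C g f) = Comp C (Comp C h g) f) \<and>
     (\<forall>f\<in>Arr C. Comp C (Idm C (Cod C f)) f = f \<and> Comp C f (Idm C (Dom C f)) = f)"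

definition is_star_category :: "('o, 'm) starcat \<Rightarrow> bool" where
  "is_star_category C \<longleftrightarrow> is_category C \<and>
     (\<forall>f\<in>Arr C. Star C f \<in> hom C (Cod C f) (Dom C f)) \<and>
     (\<forall>x\<in>Obj C. Star C (Idm C x) = Idm C x) \<and>
     (\<forall>f\<in>Arr C. \<forall>g\<in>Arr C. Dom C g = Cod C f \<longrightarrow>
         Star C (Comp C g f) = Comp C (Star C f) (Star C g)) \<and>
     (\<forall>f\<in>Arr C. Star C (Star C f) = f)"

definition is_isometry :: "('o, 'm) starcat \<Rightarrow> 'm \<Rightarrow> bool" where
  "is_isometry C f \<longleftrightarrow> f \<in> Arr C \<and> Comp C (Star C f) f = Idm C (Dom C f)"

definition is_iso :: "('o, 'm) starcat \<Rightarrow> 'm \<Rightarrow> bool" where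
  "is_iso C f \<longleftrightarrow> f \<in> Arr C \<and> (\<exists>g\<in>hom C (Cod C f) (Dom C f).
       Comp C g f = Idm C (Dom C f) \<and> Comp C f g = Idm C (Cod C f))"

definition is_unitary :: "('o, 'm) starcat \<Rightarrow> 'm \<Rightarrow> bool" where
  "is_unitary C f \<longleftrightarrow> is_isometry C f \<and> is_iso C f"

definition is_partial_isometry :: "('o, 'm) starcat \<Rightarrow> 'm \<Rightarrow> bool" where
  "is_partial_isometry C f \<longleftrightarrow> f \<in> Arr C \<and> f = Comp C f (Comp C (Star C f) f)"

definition is_mono :: "('o, 'm) starcat \<Rightarrow> 'm \<Rightarrow> bool" where
  "is_mono C m \<longleftrightarrow> m \<in> Arr C \<and>
     (\<forall>a\<in>Arr C. \<forall>b\<in>Arr C. Cod C a = Dom C m \<longrightarrow> Cod C b = Dom C m \<longrightarrow> Dom C a = Dom C b \<longrightarrow>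
        Comp C m a = Comp C m b \<longrightarrow> a = b)"

definition is_epi :: "('o, 'm) starcat \<Rightarrow> 'm \<Rightarrow> bool" where
  "is_epi C e \<longleftrightarrow> e \<in> Arr C \<and>
     (\<forall>a\<in>Arr C. \<forall>b\<in>Arr C. Dom C a = Cod C e \<longrightarrow> Dom C b = Cod C e \<longrightarrow> Cod C a = Cod C b \<longrightarrow>
        Comp C a e = Comp C b e \<longrightarrow> a = b)"

definition is_zero_object :: "('o, 'm) starcat \<Rightarrow> 'o \<Rightarrow> bool" where
  "is_zero_object C z \<longleftrightarrow> z \<in> Obj C \<and>
     (\<forall>x\<in>Obj C. (\<exists>!a. a \<in> hom C x z) \<and> (\<exists>!a. a \<in> hom C z x))"

definition is_zero_morphism :: "('o, 'm) starcat \<Rightarrow> 'm \<Rightarrow> bool" where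
  "is_zero_morphism C f \<longleftrightarrow> f \<in> Arr C \<and>
     (\<exists>z a b. is_zero_object C z \<and> a \<in> hom C (Dom C f) z \<and> b \<in> hom C z (Cod C f) \<and>
        f = Comp C b a)"

definition is_kernel :: "('o, 'm) starcat \<Rightarrow> 'm \<Rightarrow> 'm \<Rightarrow> bool" where
  "is_kernel C f k \<longleftrightarrow> f \<in> Arr C \<and> k \<in> Arr C \<and> Cod C k = Dom C f \<and>
     is_zero_morphism C (Comp C f k) \<and>
     (\<forall>m\<in>Arr C. Cod C m = Dom C f \<longrightarrow> is_zero_morphism C (Comp C f m) \<longrightarrow>
        (\<exists>!u. u \<in> hom C (Dom C m) (Dom C k) \<and> Comp C k u = m))"

definition is_product :: "('o, 'm) starcat \<Rightarrow> 'o \<Rightarrow> 'o \<Rightarrow> 'o \<Rightarrow> 'm \<Rightarrow> 'm \<Rightarrow> bool" where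
  "is_product C X1 X2 X r1 r2 \<longleftrightarrow> X \<in> Obj C \<and> r1 \<in> hom C X X1 \<and> r2 \<in> hom C X X2 \<and>
     (\<forall>Z\<in>Obj C. \<forall>p1\<in>hom C Z X1. \<forall>p2\<in>hom C Z X2.
        (\<exists>!u. u \<in> hom C Z X \<and> Comp C r1 u = p1 \<and> Comp C r2 u = p2))"

definition is_coproduct :: "('o, 'm) starcat \<Rightarrow> 'o \<Rightarrow> 'o \<Rightarrow> 'o \<Rightarrow> 'm \<Rightarrow> 'm \<Rightarrow> bool" where
  "is_coproduct C X1 X2 X s1 s2 \<longleftrightarrow> X \<in> Obj C \<and> s1 \<in> hom C X1 X \<and> s2 \<in> hom C X2 X \<and>
     (\<forall>Z\<in>Obj C. \<forall>p1\<in>hom C X1 Z. \<forall>p2\<in>hom C X2 Z.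
        (\<exists>!u. u \<in> hom C X Z \<and> Comp C u s1 = p1 \<and> Comp C u s2 = p2))"

definition is_biproduct ::
  "('o, 'm) starcat \<Rightarrow> 'o \<Rightarrow> 'o \<Rightarrow> 'o \<Rightarrow> 'm \<Rightarrow> 'm \<Rightarrow> 'm \<Rightarrow> 'm \<Rightarrow> bool" where
  "is_biproduct C X1 X2 X s1 r1 s2 r2 \<longleftrightarrow>
     is_product C X1 X2 X r1 r2 \<and> is_coproduct C X1 X2 X s1 s2 \<and>
     Comp C r1 s1 = Idm C X1 \<and> Comp C r2 s2 = Idm C X2 \<and>
     is_zero_morphism C (Comp C r2 s1) \<and> is_zero_morphism C (Comp C r1 s2)"

definition is_pre_hilbert_star_category :: "('o, 'm) starcat \<Rightarrow> bool" where
  "is_pre_hilbert_star_category C \<longleftrightarrow> is_star_category C \<and>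
     \<comment> \<open>(R1)\<close> (\<exists>z. is_zero_object C z) \<and>
     \<comment> \<open>(R2)\<close> (\<forall>X1\<in>Obj C. \<forall>X2\<in>Obj C. \<exists>X s1 s2.
         is_biproduct C X1 X2 X s1 (Star C s1) s2 (Star C s2)) \<and>
     \<comment> \<open>(R3)\<close> (\<forall>f\<in>Arr C. \<exists>k. is_kernel C f k \<and> is_isometry C k) \<and>
     \<comment> \<open>(R4)\<close> (\<forall>A X s1 r1 s2 r2 d. is_biproduct C A A X s1 r1 s2 r2 \<longrightarrow> d \<in> hom C A X \<longrightarrow>
         Comp C r1 d = Idm C A \<longrightarrow> Comp C r2 d = Idm C A \<longrightarrow>
         (\<exists>h\<in>Arr C. is_kernel C h d))"

text \<open>Preorder on subobjects (represented by monomorphisms): m \<le> n iff m factors through n.\<close>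
definition subobj_le :: "('o, 'm) starcat \<Rightarrow> 'm \<Rightarrow> 'm \<Rightarrow> bool" where
  "subobj_le C m n \<longleftrightarrow> Cod C m = Cod C n \<and> (\<exists>u. u \<in> hom C (Dom C m) (Dom C n) \<and> Comp C n u = m)"

definition subobj_eq :: "('o, 'm) starcat \<Rightarrow> 'm \<Rightarrow> 'm \<Rightarrow> bool" where
  "subobj_eq C m n \<longleftrightarrow> subobj_le C m n \<and> subobj_le C n m"

definition factors_through :: "('o, 'm) starcat \<Rightarrow> 'm \<Rightarrow> 'm \<Rightarrow> bool" where
  "factors_through C f m \<longleftrightarrow> Cod C m = Cod C f \<and> (\<exists>u. u \<in> hom C (Dom C f) (Dom C m) \<and> Comp C m u = f)"

text \<open>r represents Ran f: the smallest subobject of the codomain through which f factors.\<close>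
definition is_range :: "('o, 'm) starcat \<Rightarrow> 'm \<Rightarrow> 'm \<Rightarrow> bool" where
  "is_range C f r \<longleftrightarrow> f \<in> Arr C \<and> is_mono C r \<and> factors_through C f r \<and>
     (\<forall>m. is_mono C m \<longrightarrow> factors_through C f m \<longrightarrow> subobj_le C r m)"

definition is_perp :: "('o, 'm) starcat \<Rightarrow> 'm \<Rightarrow> 'm \<Rightarrow> bool" where
  "is_perp C m p \<longleftrightarrow> is_kernel C (Star C m) p"

text \<open>Ker h \<ge> (Ran f)^\<perp>, stated for all representatives.\<close>
definition ker_ge_ran_perp :: "('o, 'm) starcat \<Rightarrow> 'm \<Rightarrow> 'm \<Rightarrow> bool" where
  "ker_ge_ran_perp C h f \<longleftrightarrow>
     (\<forall>k r p. is_kernel C h k \<longrightarrow> is_range C f r \<longrightarrow> is_perp C r p \<longrightarrow> subobj_le C p k)"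

definition ker_le_ran_perp :: "('o, 'm) starcat \<Rightarrow> 'm \<Rightarrow> 'm \<Rightarrow> bool" where
  "ker_le_ran_perp C h f \<longleftrightarrow>
     (\<forall>k r p. is_kernel C h k \<longrightarrow> is_range C f r \<longrightarrow> is_perp C r p \<longrightarrow> subobj_le C k p)"

text \<open>(Ran h)^{\<perp>\<perp>} = (Ran g)^{\<perp>\<perp>}, stated for all representatives.\<close>
definition ran_perpperp_eq :: "('o, 'm) starcat \<Rightarrow> 'm \<Rightarrow> 'm \<Rightarrow> bool" where
  "ran_perpperp_eq C h g \<longleftrightarrow>
     (\<forall>r1 p1 q1 r2 p2 q2. is_range C h r1 \<longrightarrow> is_perp C r1 p1 \<longrightarrow> is_perp C p1 q1 \<longrightarrow>
        is_range C g r2 \<longrightarrow> is_perp C r2 p2 \<longrightarrow> is_perp C p2 q2 \<longrightarrow> subobj_eq C q1 q2)"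

definition is_extension :: "('o, 'm) starcat \<Rightarrow> 'm \<Rightarrow> 'm \<Rightarrow> 'm \<Rightarrow> bool" where
  "is_extension C f g e \<longleftrightarrow> e \<in> hom C (Cod C f) (Cod C g) \<and> Comp C e f = g"

end

theory Submission
  imports Defs
begin

text \<open>
  Write \<open>f = q \<cdot> v\<close>, where \<open>p\<close> is an isometric kernel of \<open>f\<^sup>\<dagger>\<close> (representing
  \<open>(Ran f)\<^sup>\<bottom>\<close>) and \<open>q\<close> an isometric kernel of \<open>p\<^sup>\<dagger>\<close> (representing \<open>(Ran f)\<^sup>\<bottom>\<^sup>\<bottom>\<close>).
  By (R4) equality of parallel morphisms can be tested by zero morphisms; consequently \<open>v\<close>
  is epic and \<open>p\<close>, \<open>q\<close> are jointly epic.

  The condition \<open>Ker h \<ge> (Ran f)\<^sup>\<bottom>\<close> just says \<open>h \<cdot> p = 0\<close>, so such an extension \<open>h\<close> is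
  determined by \<open>h \<cdot> q\<close>, which equals \<open>e \<cdot> q\<close> for any extension \<open>e\<close>; hence \<open>h = e \<cdot> q \<cdot> q\<^sup>\<dagger>\<close>.
  If \<open>f\<^sup>\<dagger> \<cdot> f = g\<^sup>\<dagger> \<cdot> g\<close>, cancelling \<open>v\<close> shows that \<open>h \<cdot> q\<close> is an isometry, so
  \<open>h\<^sup>\<dagger> \<cdot> h = q \<cdot> q\<^sup>\<dagger>\<close> is the projection onto \<open>(Ran f)\<^sup>\<bottom>\<^sup>\<bottom>\<close>; this gives the partial isometry,
  the kernel bound, and, for epic \<open>f\<close> (where \<open>q \<cdot> q\<^sup>\<dagger> = 1\<close>), the isometry. Conversely a partial
  isometry with \<open>Ker h \<le> (Ran f)\<^sup>\<bottom>\<close> satisfies \<open>h\<^sup>\<dagger> \<cdot> h \<cdot> f = f\<close>. Unitarity for epic \<open>g\<close> follows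
  by cancelling \<open>g = h \<cdot> f\<close> in \<open>h \<cdot> h\<^sup>\<dagger> \<cdot> g = g\<close>.
\<close>

locale pre_hilbert_star_category =
  fixes C :: "('o, 'm) starcat"
  assumes pre_hilbert: "is_pre_hilbert_star_category C"
begin

abbreviation comp (infixr "\<cdot>" 70) where "g \<cdot> f \<equiv> Comp C g f"
abbreviation adj ("_\<^sup>\<dagger>" [1000] 1000) where "f\<^sup>\<dagger> \<equiv> Star C f"
abbreviation is_zero where "is_zero f \<equiv> is_zero_morphism C f"

lemma category: "is_category C"
  and star_category: "is_star_category C"
  using pre_hilbert unfolding is_pre_hilbert_star_category_def is_star_category_def by auto

lemma in_hom_iff: "a \<in> hom C x y \<longleftrightarrow> a \<in> Arr C \<and> Dom C a = x \<and> Cod C a = y"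
  unfolding hom_def by simp

lemma Dom_in_Obj [simp]: "f \<in> Arr C \<Longrightarrow> Dom C f \<in> Obj C"
  and Cod_in_Obj [simp]: "f \<in> Arr C \<Longrightarrow> Cod C f \<in> Obj C"
  using category unfolding is_category_def by auto

lemma comp_in_Arr [simp]: "f \<in> Arr C \<Longrightarrow> g \<in> Arr C \<Longrightarrow> Dom C g = Cod C f \<Longrightarrow> g \<cdot> f \<in> Arr C"
  and Dom_comp [simp]: "f \<in> Arr C \<Longrightarrow> g \<in> Arr C \<Longrightarrow> Dom C g = Cod C f \<Longrightarrow> Dom C (g \<cdot> f) = Dom C f"
  and Cod_comp [simp]: "f \<in> Arr C \<Longrightarrow> g \<in> Arr C \<Longrightarrow> Dom C g = Cod C f \<Longrightarrow> Cod C (g \<cdot> f) = Cod C g"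
  using category unfolding is_category_def in_hom_iff by auto

lemma comp_assoc [simp]:
  assumes "f \<in> Arr C" "g \<in> Arr C" "h \<in> Arr C" "Dom C g = Cod C f" "Dom C h = Cod C g"
  shows "(h \<cdot> g) \<cdot> f = h \<cdot> (g \<cdot> f)"
proof -
  have "\<forall>f\<in>Arr C. \<forall>g\<in>Arr C. \<forall>h\<in>Arr C. Dom C g = Cod C f \<longrightarrow> Dom C h = Cod C g \<longrightarrow>
      h \<cdot> (g \<cdot> f) = (h \<cdot> g) \<cdot> f"
    using category unfolding is_category_def by blast
  then show ?thesis
    using assms by simp
qed

lemma Idm_in_Arr [simp]: "x \<in> Obj C \<Longrightarrow> Idm C x \<in> Arr C"
  and Dom_Idm [simp]: "x \<in> Obj C \<Longrightarrow> Dom C (Idm C x) = x"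
  and Cod_Idm [simp]: "x \<in> Obj C \<Longrightarrow> Cod C (Idm C x) = x"
  using category unfolding is_category_def in_hom_iff by auto

lemma comp_Idm_left [simp]: "f \<in> Arr C \<Longrightarrow> Cod C f = y \<Longrightarrow> Idm C y \<cdot> f = f"
  and comp_Idm_right [simp]: "f \<in> Arr C \<Longrightarrow> Dom C f = x \<Longrightarrow> f \<cdot> Idm C x = f"
  using category unfolding is_category_def by auto

lemma adj_in_Arr [simp]: "f \<in> Arr C \<Longrightarrow> f\<^sup>\<dagger> \<in> Arr C"
  and Dom_adj [simp]: "f \<in> Arr C \<Longrightarrow> Dom C (f\<^sup>\<dagger>) = Cod C f"
  and Cod_adj [simp]: "f \<in> Arr C \<Longrightarrow> Cod C (f\<^sup>\<dagger>) = Dom C f"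
  using star_category unfolding is_star_category_def in_hom_iff by auto

lemma adj_adj [simp]: "f \<in> Arr C \<Longrightarrow> f\<^sup>\<dagger>\<^sup>\<dagger> = f"
  and adj_comp [simp]: "f \<in> Arr C \<Longrightarrow> g \<in> Arr C \<Longrightarrow> Dom C g = Cod C f \<Longrightarrow> (g \<cdot> f)\<^sup>\<dagger> = f\<^sup>\<dagger> \<cdot> g\<^sup>\<dagger>"
  using star_category unfolding is_star_category_def by auto

section \<open>Zero morphisms\<close>

lemma is_zeroE:
  assumes "is_zero f"
  obtains z a b where "is_zero_object C z" "a \<in> Arr C" "Dom C a = Dom C f" "Cod C a = z"
    "b \<in> Arr C" "Dom C b = z" "Cod C b = Cod C f" "f = b \<cdot> a"
  using assms unfolding is_zero_morphism_def in_hom_iff by blast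

lemma zero_if_factors_through_zero_object:
  assumes "is_zero_object C z" "a \<in> Arr C" "Cod C a = z" "b \<in> Arr C" "Dom C b = z"
  shows "is_zero (b \<cdot> a)"
  unfolding is_zero_morphism_def in_hom_iff using assms by auto

lemma zero_comp_left:
  assumes "is_zero f" and "g \<in> Arr C" "Dom C g = Cod C f"
  shows "is_zero (g \<cdot> f)"
proof -
  obtain z a b where z: "is_zero_object C z" and a: "a \<in> Arr C" "Dom C a = Dom C f" "Cod C a = z"
    and b: "b \<in> Arr C" "Dom C b = z" "Cod C b = Cod C f" and f: "f = b \<cdot> a"
    using assms(1) by (rule is_zeroE)
  have "g \<cdot> f = (g \<cdot> b) \<cdot> a"
    using a b assms(2,3) f by simp
  then show ?thesis
    using zero_if_factors_through_zero_object[OF z a(1,3), of "g \<cdot> b"] b assms(2,3) by simp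
qed

lemma zero_comp_right:
  assumes "is_zero f" and "g \<in> Arr C" "Cod C g = Dom C f"
  shows "is_zero (f \<cdot> g)"
proof -
  obtain z a b where z: "is_zero_object C z" and a: "a \<in> Arr C" "Dom C a = Dom C f" "Cod C a = z"
    and b: "b \<in> Arr C" "Dom C b = z" "Cod C b = Cod C f" and f: "f = b \<cdot> a"
    using assms(1) by (rule is_zeroE)
  have "f \<cdot> g = b \<cdot> (a \<cdot> g)"
    using a b assms(2,3) f by simp
  then show ?thesis
    using zero_if_factors_through_zero_object[OF z _ _ b(1,2), of "a \<cdot> g"] a assms(2,3) by simp
qed

lemma zero_adj:
  assumes "is_zero f"
  shows "is_zero (f\<^sup>\<dagger>)"
proof -
  obtain z a b where z: "is_zero_object C z" and a: "a \<in> Arr C" "Dom C a = Dom C f" "Cod C a = z"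
    and b: "b \<in> Arr C" "Dom C b = z" "Cod C b = Cod C f" and f: "f = b \<cdot> a"
    using assms by (rule is_zeroE)
  have "f\<^sup>\<dagger> = a\<^sup>\<dagger> \<cdot> b\<^sup>\<dagger>"
    using a b f by simp
  then show ?thesis
    using zero_if_factors_through_zero_object[OF z, of "b\<^sup>\<dagger>" "a\<^sup>\<dagger>"] a b by simp
qed

lemma zero_adj_iff: "f \<in> Arr C \<Longrightarrow> is_zero (f\<^sup>\<dagger>) \<longleftrightarrow> is_zero f"
  using zero_adj adj_adj by metis

lemma zero_object_hom_unique:
  assumes z: "is_zero_object C z"
  shows "a \<in> hom C x z \<Longrightarrow> b \<in> hom C x z \<Longrightarrow> a = b"
    and "a \<in> hom C z x \<Longrightarrow> b \<in> hom C z x \<Longrightarrow> a = b"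
proof -
  assume "a \<in> hom C x z" "b \<in> hom C x z"
  moreover from this have "x \<in> Obj C"
    by (metis Dom_in_Obj in_hom_iff)
  ultimately show "a = b"
    using z unfolding is_zero_object_def by blast
next
  assume "a \<in> hom C z x" "b \<in> hom C z x"
  moreover from this have "x \<in> Obj C"
    by (metis Cod_in_Obj in_hom_iff)
  ultimately show "a = b"
    using z unfolding is_zero_object_def by blast
qed

lemma zero_unique:
  assumes f: "is_zero f" and g: "is_zero g" and "Dom C f = Dom C g" "Cod C f = Cod C g"
  shows "f = g"
proof -
  obtain z a b where z: "is_zero_object C z" and a: "a \<in> hom C (Dom C f) z"
    and b: "b \<in> hom C z (Cod C f)" and f: "f = b \<cdot> a"
    using f unfolding is_zero_morphism_def by blast
  obtain z' a' b' where z': "is_zero_object C z'" and a': "a' \<in> hom C (Dom C f) z'"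
    and b': "b' \<in> hom C z' (Cod C f)" and g: "g = b' \<cdot> a'"
    using g unfolding is_zero_morphism_def assms(3,4) by blast
  have "z \<in> Obj C"
    using z unfolding is_zero_object_def by blast
  then obtain i where i: "i \<in> hom C z z'"
    using z' unfolding is_zero_object_def by (meson ex1_implies_ex)
  have "i \<cdot> a \<in> hom C (Dom C f) z'" "b' \<cdot> i \<in> hom C z (Cod C f)"
    using a b' i by (auto simp: in_hom_iff)
  then have "a' = i \<cdot> a" "b = b' \<cdot> i"
    using zero_object_hom_unique(1)[OF z' a'] zero_object_hom_unique(2)[OF z b] by simp_all
  moreover have "(b' \<cdot> i) \<cdot> a = b' \<cdot> (i \<cdot> a)"
    using a b' i by (auto simp: in_hom_iff)
  ultimately show "f = g"
    using f g by simp
qed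

lemma kernelD:
  assumes "is_kernel C a k"
  shows "k \<in> Arr C" "Cod C k = Dom C a" "a \<in> Arr C" "is_zero (a \<cdot> k)"
  using assms unfolding is_kernel_def by auto

lemma kernel_factor:
  assumes "is_kernel C a k" "m \<in> Arr C" "Cod C m = Dom C a" "is_zero (a \<cdot> m)"
  obtains u where "u \<in> Arr C" "Dom C u = Dom C m" "Cod C u = Dom C k" "k \<cdot> u = m"
proof -
  have "\<exists>!u. u \<in> hom C (Dom C m) (Dom C k) \<and> k \<cdot> u = m"
    using assms unfolding is_kernel_def by blast
  then show ?thesis
    using that unfolding in_hom_iff by blast
qed

lemma isometric_kernel_exists:
  assumes "a \<in> Arr C"
  obtains k where "is_kernel C a k" "is_isometry C k"
  using assms pre_hilbert unfolding is_pre_hilbert_star_category_def by blast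

lemma isometryD:
  assumes "is_isometry C k"
  shows "k \<in> Arr C" "k\<^sup>\<dagger> \<cdot> k = Idm C (Dom C k)"
  using assms unfolding is_isometry_def by auto

lemma isometry_cancel:
  assumes k: "is_isometry C k" and x: "x \<in> Arr C" "Cod C x = Dom C k"
  shows "k\<^sup>\<dagger> \<cdot> (k \<cdot> x) = x"
proof -
  have "k\<^sup>\<dagger> \<cdot> (k \<cdot> x) = (k\<^sup>\<dagger> \<cdot> k) \<cdot> x"
    using isometryD(1)[OF k] x by simp
  also have "\<dots> = x"
    unfolding isometryD(2)[OF k] using x by simp
  finally show ?thesis .
qed

lemma isometry_mono: "is_isometry C k \<Longrightarrow> is_mono C k"
  unfolding is_mono_def by (metis isometryD(1) isometry_cancel)

lemma mono_cancel:
  assumes "is_mono C m" "x \<in> Arr C" "y \<in> Arr C" "Cod C x = Dom C m" "Cod C y = Dom C m"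
    "Dom C x = Dom C y" "m \<cdot> x = m \<cdot> y"
  shows "x = y"
  using assms unfolding is_mono_def by blast

lemma epi_cancel:
  assumes "is_epi C e" "x \<in> Arr C" "y \<in> Arr C" "Dom C x = Cod C e" "Dom C y = Cod C e"
    "Cod C x = Cod C y" "x \<cdot> e = y \<cdot> e"
  shows "x = y"
  using assms unfolding is_epi_def by blast

lemma mono_if_adj_epi:
  assumes f: "f \<in> Arr C" and epi: "is_epi C (f\<^sup>\<dagger>)"
  shows "is_mono C f"
  unfolding is_mono_def
proof (intro conjI ballI impI)
  fix a b
  assume a: "a \<in> Arr C" "Cod C a = Dom C f" and b: "b \<in> Arr C" "Cod C b = Dom C f"
    and "Dom C a = Dom C b" "f \<cdot> a = f \<cdot> b"
  then have "a\<^sup>\<dagger> \<cdot> f\<^sup>\<dagger> = b\<^sup>\<dagger> \<cdot> f\<^sup>\<dagger>"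
    using f by (metis adj_comp)
  then have "a\<^sup>\<dagger> = b\<^sup>\<dagger>"
    by (rule epi_cancel[OF epi, rotated -1]) (use a b f \<open>Dom C a = Dom C b\<close> in simp_all)
  then show "a = b"
    using a b by (metis adj_adj)
qed (fact f)

text \<open>\<open>Ker a \<le> Ker b\<close>, expressed without choosing kernels.\<close>

definition ker_le :: "'m \<Rightarrow> 'm \<Rightarrow> bool" where
  "ker_le a b \<longleftrightarrow> (\<forall>w\<in>Arr C. Cod C w = Dom C a \<longrightarrow> is_zero (a \<cdot> w) \<longrightarrow> is_zero (b \<cdot> w))"

lemma ker_leI:
  "(\<And>w. w \<in> Arr C \<Longrightarrow> Cod C w = Dom C a \<Longrightarrow> is_zero (a \<cdot> w) \<Longrightarrow> is_zero (b \<cdot> w)) \<Longrightarrow> ker_le a b"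
  unfolding ker_le_def by blast

lemma ker_leD:
  "ker_le a b \<Longrightarrow> w \<in> Arr C \<Longrightarrow> Cod C w = Dom C a \<Longrightarrow> is_zero (a \<cdot> w) \<Longrightarrow> is_zero (b \<cdot> w)"
  unfolding ker_le_def by blast

lemma ker_le_trans: "ker_le a b \<Longrightarrow> ker_le b c \<Longrightarrow> Dom C a = Dom C b \<Longrightarrow> ker_le a c"
  unfolding ker_le_def by simp

lemma ker_le_comp:
  assumes "a \<in> Arr C" "b \<in> Arr C" "Dom C b = Cod C a"
  shows "ker_le a (b \<cdot> a)"
proof (rule ker_leI)
  fix w
  assume w: "w \<in> Arr C" "Cod C w = Dom C a" and "is_zero (a \<cdot> w)"
  then have "is_zero (b \<cdot> (a \<cdot> w))"
    using assms zero_comp_left by simp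
  then show "is_zero ((b \<cdot> a) \<cdot> w)"
    using assms w by simp
qed

lemma ker_le_iff_zero_comp_kernel:
  assumes k: "is_kernel C a k" and b: "b \<in> Arr C" "Dom C b = Dom C a"
  shows "ker_le a b \<longleftrightarrow> is_zero (b \<cdot> k)"
proof
  assume "ker_le a b"
  then show "is_zero (b \<cdot> k)"
    using kernelD[OF k] by (blast intro: ker_leD)
next
  assume bk: "is_zero (b \<cdot> k)"
  show "ker_le a b"
  proof (rule ker_leI)
    fix w
    assume "w \<in> Arr C" "Cod C w = Dom C a" "is_zero (a \<cdot> w)"
    then obtain u where u: "u \<in> Arr C" "Cod C u = Dom C k" "k \<cdot> u = w"
      using kernel_factor[OF k] by metis
    show "is_zero (b \<cdot> w)"
      using zero_comp_right[OF bk u(1)] u kernelD[OF k] b by simp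
  qed
qed

lemma kernel_subobj_le_iff:
  assumes k: "is_kernel C a k" and l: "is_kernel C b l" and "Dom C a = Dom C b"
  shows "subobj_le C k l \<longleftrightarrow> ker_le a b"
proof
  assume "subobj_le C k l"
  then obtain u where u: "u \<in> Arr C" "Dom C u = Dom C k" "Cod C u = Dom C l" "l \<cdot> u = k"
    unfolding subobj_le_def in_hom_iff by blast
  have "is_zero (b \<cdot> k)"
    using zero_comp_right[OF kernelD(4)[OF l] u(1)] kernelD[OF l] u by simp
  then show "ker_le a b"
    using ker_le_iff_zero_comp_kernel[OF k] kernelD[OF l] assms(3) by simp
next
  assume "ker_le a b"
  then have "is_zero (b \<cdot> k)"
    using ker_le_iff_zero_comp_kernel[OF k] kernelD[OF l] assms(3) by simp
  then obtain u where "u \<in> Arr C" "Dom C u = Dom C k" "Cod C u = Dom C l" "l \<cdot> u = k"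
    using kernel_factor[OF l] kernelD[OF k] kernelD[OF l] assms(3) by metis
  then show "subobj_le C k l"
    unfolding subobj_le_def in_hom_iff using kernelD[OF k] kernelD[OF l] assms(3) by auto
qed

lemma ker_le_adj_if_subobj_le:
  assumes "subobj_le C m n" "m \<in> Arr C" "n \<in> Arr C"
  shows "ker_le (n\<^sup>\<dagger>) (m\<^sup>\<dagger>)"
proof -
  obtain u where u: "u \<in> Arr C" "Dom C u = Dom C m" "Cod C u = Dom C n" "n \<cdot> u = m"
    using assms(1) unfolding subobj_le_def in_hom_iff by blast
  then have "m\<^sup>\<dagger> = u\<^sup>\<dagger> \<cdot> n\<^sup>\<dagger>"
    using assms(3) by (metis adj_comp)
  then show ?thesis
    using ker_le_comp[of "n\<^sup>\<dagger>" "u\<^sup>\<dagger>"] u assms(3) by simp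
qed

section \<open>Detecting equality by zero morphisms\<close>

lemma diagonal_has_kernel:
  assumes Y: "Y \<in> Obj C"
  obtains B r1 r2 D h where "is_product C Y Y B r1 r2" "D \<in> hom C Y B"
    "r1 \<cdot> D = Idm C Y" "r2 \<cdot> D = Idm C Y" "is_kernel C h D"
proof -
  obtain B s1 s2 where bp: "is_biproduct C Y Y B s1 (s1\<^sup>\<dagger>) s2 (s2\<^sup>\<dagger>)"
    using Y pre_hilbert unfolding is_pre_hilbert_star_category_def by blast
  then have prod: "is_product C Y Y B (s1\<^sup>\<dagger>) (s2\<^sup>\<dagger>)"
    unfolding is_biproduct_def by blast
  have "Idm C Y \<in> hom C Y Y"
    using Y by (simp add: in_hom_iff)
  then obtain D where D: "D \<in> hom C Y B" "s1\<^sup>\<dagger> \<cdot> D = Idm C Y" "s2\<^sup>\<dagger> \<cdot> D = Idm C Y"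
    using prod Y unfolding is_product_def by blast
  moreover obtain h where "is_kernel C h D"
    using pre_hilbert bp D unfolding is_pre_hilbert_star_category_def by blast
  ultimately show ?thesis
    using prod that by blast
qed

lemma product_pairing_unique:
  assumes "is_product C X1 X2 X r1 r2" "u \<in> hom C Z X" "u' \<in> hom C Z X"
    "r1 \<cdot> u = r1 \<cdot> u'" "r2 \<cdot> u = r2 \<cdot> u'"
  shows "u = u'"
proof -
  have "r1 \<in> hom C X X1" "r2 \<in> hom C X X2" and Z: "Z \<in> Obj C"
    using assms(1,2) unfolding is_product_def in_hom_iff by auto
  then have "r1 \<cdot> u \<in> hom C Z X1" "r2 \<cdot> u \<in> hom C Z X2"
    using assms(2) by (auto simp: in_hom_iff)
  then have "\<exists>!v. v \<in> hom C Z X \<and> r1 \<cdot> v = r1 \<cdot> u \<and> r2 \<cdot> v = r2 \<cdot> u"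
    using assms(1) Z unfolding is_product_def by blast
  then show ?thesis
    using assms(2-5) by metis
qed

text \<open>The witness is the pairing \<open>\<langle>x, y\<rangle>\<close> followed by a morphism whose kernel is the
  diagonal, which exists by (R4).\<close>

lemma difference_morphism_exists:
  assumes x: "x \<in> Arr C" and y: "y \<in> Arr C" "Dom C y = Dom C x" "Cod C y = Cod C x"
  obtains d where "d \<in> Arr C" "Dom C d = Dom C x"
    "\<And>z. z \<in> Arr C \<Longrightarrow> Cod C z = Dom C x \<Longrightarrow> is_zero (d \<cdot> z) \<longleftrightarrow> x \<cdot> z = y \<cdot> z"
proof -
  obtain B r1 r2 D h where prod: "is_product C (Cod C x) (Cod C x) B r1 r2"
    and D_hom: "D \<in> hom C (Cod C x) B" and D: "r1 \<cdot> D = Idm C (Cod C x)" "r2 \<cdot> D = Idm C (Cod C x)"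
    and h: "is_kernel C h D"
    using diagonal_has_kernel[OF Cod_in_Obj[OF x]] by blast
  have r: "r1 \<in> Arr C" "Dom C r1 = B" "Cod C r1 = Cod C x"
    "r2 \<in> Arr C" "Dom C r2 = B" "Cod C r2 = Cod C x"
    using prod unfolding is_product_def in_hom_iff by auto
  have D_arr: "D \<in> Arr C" "Dom C D = Cod C x" "Cod C D = B"
    using D_hom by (auto simp: in_hom_iff)
  have "x \<in> hom C (Dom C x) (Cod C x)" "y \<in> hom C (Dom C x) (Cod C x)" "Dom C x \<in> Obj C"
    using x y by (simp_all add: in_hom_iff)
  then obtain p where p_hom: "p \<in> hom C (Dom C x) B" and p: "r1 \<cdot> p = x" "r2 \<cdot> p = y"
    using prod unfolding is_product_def by blast
  have p_arr: "p \<in> Arr C" "Dom C p = Dom C x" "Cod C p = B"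
    using p_hom by (auto simp: in_hom_iff)
  have hD: "h \<in> Arr C" "Dom C h = B" "is_zero (h \<cdot> D)"
    using kernelD[OF h] D_arr by auto
  have "is_zero ((h \<cdot> p) \<cdot> z) \<longleftrightarrow> x \<cdot> z = y \<cdot> z"
    if z: "z \<in> Arr C" "Cod C z = Dom C x" for z
  proof
    assume "is_zero ((h \<cdot> p) \<cdot> z)"
    then have "is_zero (h \<cdot> (p \<cdot> z))"
      using hD p_arr z by simp
    then obtain u where u: "u \<in> Arr C" "Cod C u = Dom C D" "D \<cdot> u = p \<cdot> z"
      using kernel_factor[OF h, of "p \<cdot> z"] hD p_arr z by auto
    have "x \<cdot> z = (r1 \<cdot> D) \<cdot> u" "y \<cdot> z = (r2 \<cdot> D) \<cdot> u"
      unfolding p[symmetric] using u p_arr r D_arr z by simp_all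
    then show "x \<cdot> z = y \<cdot> z"
      unfolding D by simp
  next
    assume xz_yz: "x \<cdot> z = y \<cdot> z"
    have "p \<cdot> z = D \<cdot> (x \<cdot> z)"
    proof (rule product_pairing_unique[OF prod])
      show "p \<cdot> z \<in> hom C (Dom C z) B" "D \<cdot> (x \<cdot> z) \<in> hom C (Dom C z) B"
        using p_arr D_arr x z by (auto simp: in_hom_iff)
      have "r1 \<cdot> (D \<cdot> (x \<cdot> z)) = (r1 \<cdot> D) \<cdot> (x \<cdot> z)" "r2 \<cdot> (D \<cdot> (x \<cdot> z)) = (r2 \<cdot> D) \<cdot> (x \<cdot> z)"
        using D_arr r x z by simp_all
      moreover have "r1 \<cdot> (p \<cdot> z) = x \<cdot> z" "r2 \<cdot> (p \<cdot> z) = y \<cdot> z"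
        unfolding p[symmetric] using p_arr r z by simp_all
      ultimately show "r1 \<cdot> (p \<cdot> z) = r1 \<cdot> (D \<cdot> (x \<cdot> z))" "r2 \<cdot> (p \<cdot> z) = r2 \<cdot> (D \<cdot> (x \<cdot> z))"
        unfolding D using x y z xz_yz by simp_all
    qed
    then have "(h \<cdot> p) \<cdot> z = (h \<cdot> D) \<cdot> (x \<cdot> z)"
      using hD p_arr D_arr x z by simp
    then show "is_zero ((h \<cdot> p) \<cdot> z)"
      using zero_comp_right[OF hD(3), of "x \<cdot> z"] hD D_arr x z by simp
  qed
  moreover have "h \<cdot> p \<in> Arr C" "Dom C (h \<cdot> p) = Dom C x"
    using hD p_arr by auto
  ultimately show ?thesis
    using that by blast
qed

lemma jointly_epi_if_adj_reflect_zero: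
  assumes p: "p \<in> Arr C" and q: "q \<in> Arr C" "Cod C q = Cod C p"
    and reflect: "\<And>w. w \<in> Arr C \<Longrightarrow> Cod C w = Cod C p \<Longrightarrow>
      is_zero (p\<^sup>\<dagger> \<cdot> w) \<Longrightarrow> is_zero (q\<^sup>\<dagger> \<cdot> w) \<Longrightarrow> is_zero w"
    and x: "x \<in> Arr C" "Dom C x = Cod C p" and y: "y \<in> Arr C" "Dom C y = Cod C p" "Cod C y = Cod C x"
    and eq: "x \<cdot> p = y \<cdot> p" "x \<cdot> q = y \<cdot> q"
  shows "x = y"
proof -
  obtain d where d: "d \<in> Arr C" "Dom C d = Dom C x"
    and zero_iff: "\<And>z. z \<in> Arr C \<Longrightarrow> Cod C z = Dom C x \<Longrightarrow> is_zero (d \<cdot> z) \<longleftrightarrow> x \<cdot> z = y \<cdot> z"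
    using difference_morphism_exists[OF x(1) y(1)] x(2) y(2,3) by metis
  have "is_zero (d \<cdot> p)" "is_zero (d \<cdot> q)"
    using zero_iff p q x eq by simp_all
  then have "is_zero ((d \<cdot> p)\<^sup>\<dagger>)" "is_zero ((d \<cdot> q)\<^sup>\<dagger>)"
    by (simp_all add: zero_adj)
  then have "is_zero (p\<^sup>\<dagger> \<cdot> d\<^sup>\<dagger>)" "is_zero (q\<^sup>\<dagger> \<cdot> d\<^sup>\<dagger>)"
    using d p q x by simp_all
  then have "is_zero d"
    using reflect[of "d\<^sup>\<dagger>"] zero_adj_iff[of d] d x by simp
  then have "x \<cdot> Idm C (Dom C x) = y \<cdot> Idm C (Dom C x)"
    using zero_iff[of "Idm C (Dom C x)"] d p x y by simp
  then show "x = y"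
    using x y by simp
qed

lemma epi_if_adj_reflects_zero:
  assumes v: "v \<in> Arr C"
    and reflect: "\<And>w. w \<in> Arr C \<Longrightarrow> Cod C w = Cod C v \<Longrightarrow> is_zero (v\<^sup>\<dagger> \<cdot> w) \<Longrightarrow> is_zero w"
  shows "is_epi C v"
  unfolding is_epi_def
proof (intro conjI ballI impI)
  fix x y
  assume "x \<in> Arr C" "y \<in> Arr C" "Dom C x = Cod C v" "Dom C y = Cod C v" "Cod C x = Cod C y"
    "x \<cdot> v = y \<cdot> v"
  then show "x = y"
    using jointly_epi_if_adj_reflect_zero[OF v v] reflect by auto
qed (fact v)

end

section \<open>Factorisation through the closure of the range\<close>

text \<open>The isometric kernel \<open>p\<close> of \<open>f\<^sup>\<dagger>\<close> represents \<open>(Ran f)\<^sup>\<bottom>\<close>, the isometric kernel \<open>q\<close> of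
  \<open>p\<^sup>\<dagger>\<close> represents \<open>(Ran f)\<^sup>\<bottom>\<^sup>\<bottom>\<close>, and \<open>f\<close> factors through \<open>q\<close> as \<open>q \<cdot> v\<close>.\<close>

locale ran_factorization = pre_hilbert_star_category +
  fixes f p q v
  assumes perp_kernel: "is_kernel C (f\<^sup>\<dagger>) p"
    and perp_isometry: "is_isometry C p"
    and closure_kernel: "is_kernel C (p\<^sup>\<dagger>) q"
    and closure_isometry: "is_isometry C q"
    and factor_in_Arr [simp]: "v \<in> Arr C"
    and Cod_factor [simp]: "Cod C v = Dom C q"
    and factorization: "q \<cdot> v = f"

lemma (in pre_hilbert_star_category) ran_factorization_exists:
  assumes f: "f \<in> Arr C"
  obtains p q v where "ran_factorization C f p q v"
proof -
  obtain p where p: "is_kernel C (f\<^sup>\<dagger>) p" "is_isometry C p"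
    using isometric_kernel_exists[of "f\<^sup>\<dagger>"] f by auto
  note p_facts = kernelD[OF p(1)]
  obtain q where q: "is_kernel C (p\<^sup>\<dagger>) q" "is_isometry C q"
    using isometric_kernel_exists[of "p\<^sup>\<dagger>"] p_facts by auto
  have "is_zero ((f\<^sup>\<dagger> \<cdot> p)\<^sup>\<dagger>)"
    using zero_adj p_facts(4) by blast
  then have "is_zero (p\<^sup>\<dagger> \<cdot> f)"
    using f p_facts by simp
  then obtain v where "v \<in> Arr C" "Cod C v = Dom C q" "q \<cdot> v = f"
    using kernel_factor[OF q(1), of f] kernelD[OF q(1)] p_facts f by auto
  then show ?thesis
    using that p q pre_hilbert_star_category_axioms
    by (blast intro: ran_factorization.intro ran_factorization_axioms.intro)
qed

context ran_factorization
begin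

lemma in_Arr [simp]: "f \<in> Arr C" "p \<in> Arr C" "q \<in> Arr C"
  and Cod_perp [simp]: "Cod C p = Cod C f"
  and Cod_closure [simp]: "Cod C q = Cod C f"
  and Dom_factor [simp]: "Dom C v = Dom C f"
proof -
  have p: "p \<in> Arr C" "Cod C p = Dom C (f\<^sup>\<dagger>)"
    using kernelD[OF perp_kernel] by auto
  have q: "q \<in> Arr C" "Cod C q = Dom C (p\<^sup>\<dagger>)"
    using kernelD[OF closure_kernel] by auto
  have "f \<in> Arr C" "Dom C v = Dom C f"
    unfolding factorization[symmetric] using q by simp_all
  then show "f \<in> Arr C" "p \<in> Arr C" "q \<in> Arr C" "Cod C p = Cod C f" "Cod C q = Cod C f"
    "Dom C v = Dom C f"
    using p q by simp_all
qed

lemma adj_comp_perp_zero: "is_zero (f\<^sup>\<dagger> \<cdot> p)"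
  using kernelD(4)[OF perp_kernel] .

lemma closure_adj_comp_perp_zero: "is_zero (q\<^sup>\<dagger> \<cdot> p)"
proof -
  have "is_zero ((p\<^sup>\<dagger> \<cdot> q)\<^sup>\<dagger>)"
    using zero_adj kernelD(4)[OF closure_kernel] by blast
  then show ?thesis
    by simp
qed

lemma closure_proj_fixes: "q \<cdot> (q\<^sup>\<dagger> \<cdot> f) = f"
  unfolding factorization[symmetric] using isometry_cancel[OF closure_isometry] by simp

lemma ker_adj_le_ker_closure_adj: "ker_le (f\<^sup>\<dagger>) (q\<^sup>\<dagger>)"
  using ker_le_iff_zero_comp_kernel[OF perp_kernel] closure_adj_comp_perp_zero by simp

lemma ker_closure_adj_le_ker_adj: "ker_le (q\<^sup>\<dagger>) (f\<^sup>\<dagger>)"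
proof -
  have "f\<^sup>\<dagger> = v\<^sup>\<dagger> \<cdot> q\<^sup>\<dagger>"
    unfolding factorization[symmetric] by simp
  then show ?thesis
    using ker_le_comp[of "q\<^sup>\<dagger>" "v\<^sup>\<dagger>"] by simp
qed

lemma factor_epi: "is_epi C v"
proof (rule epi_if_adj_reflects_zero)
  fix w
  assume w: "w \<in> Arr C" "Cod C w = Cod C v" and "is_zero (v\<^sup>\<dagger> \<cdot> w)"
  moreover have "f\<^sup>\<dagger> \<cdot> (q \<cdot> w) = v\<^sup>\<dagger> \<cdot> w"
    unfolding factorization[symmetric] using isometry_cancel[OF closure_isometry] w by simp
  ultimately have "is_zero (q\<^sup>\<dagger> \<cdot> (q \<cdot> w))"
    using ker_leD[OF ker_adj_le_ker_closure_adj, of "q \<cdot> w"] by simp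
  then show "is_zero w"
    using isometry_cancel[OF closure_isometry] w by simp
qed simp

lemma jointly_epi:
  assumes x: "x \<in> Arr C" "Dom C x = Cod C f" and y: "y \<in> Arr C" "Dom C y = Cod C f" "Cod C y = Cod C x"
    and "x \<cdot> p = y \<cdot> p" "x \<cdot> q = y \<cdot> q"
  shows "x = y"
proof (rule jointly_epi_if_adj_reflect_zero)
  fix w
  assume w: "w \<in> Arr C" "Cod C w = Cod C p" and pw: "is_zero (p\<^sup>\<dagger> \<cdot> w)" and "is_zero (q\<^sup>\<dagger> \<cdot> w)"
  then have "is_zero (f\<^sup>\<dagger> \<cdot> w)"
    using ker_leD[OF ker_closure_adj_le_ker_adj] by simp
  then obtain t where t: "t \<in> Arr C" "Cod C t = Dom C p" "p \<cdot> t = w"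
    using kernel_factor[OF perp_kernel, of w] w by auto
  then have "p\<^sup>\<dagger> \<cdot> w = t"
    using isometry_cancel[OF perp_isometry] by blast
  then have "is_zero t"
    using pw by simp
  then show "is_zero w"
    using zero_comp_left[of t p] t by simp
qed (use assms in simp_all)

end

section \<open>Ranges and orthogonal complements\<close>

context pre_hilbert_star_category
begin

text \<open>Factor \<open>f\<^sup>\<dagger> = c \<cdot> u\<close> through the closure of its range; then \<open>f = u\<^sup>\<dagger> \<cdot> c\<^sup>\<dagger>\<close>, and \<open>u\<^sup>\<dagger>\<close>
  represents \<open>Ran f\<close>: it is monic because \<open>u\<close> is epic, and it equals \<open>f \<cdot> c\<close>.\<close>

lemma range_exists:
  assumes f: "f \<in> Arr C"
  obtains r where "is_range C f r"
proof -
  obtain k c u where "ran_factorization C (f\<^sup>\<dagger>) k c u"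
    using ran_factorization_exists[of "f\<^sup>\<dagger>"] f by auto
  then interpret R: ran_factorization C "f\<^sup>\<dagger>" k c u .
  have "u\<^sup>\<dagger> \<cdot> c\<^sup>\<dagger> = (c \<cdot> u)\<^sup>\<dagger>"
    by simp
  also have "\<dots> = f"
    using R.factorization f by simp
  finally have f_eq: "f = u\<^sup>\<dagger> \<cdot> c\<^sup>\<dagger>" ..
  have fc: "f \<cdot> c = u\<^sup>\<dagger>"
    unfolding f_eq using isometryD(2)[OF R.closure_isometry] f by simp
  have "is_mono C (u\<^sup>\<dagger>)"
    using mono_if_adj_epi[of "u\<^sup>\<dagger>"] R.factor_epi by simp
  moreover have "factors_through C f (u\<^sup>\<dagger>)"
  proof -
    have "c\<^sup>\<dagger> \<in> hom C (Dom C f) (Dom C (u\<^sup>\<dagger>))" "Cod C (u\<^sup>\<dagger>) = Cod C f"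
      using f by (simp_all add: in_hom_iff)
    then show ?thesis
      unfolding factors_through_def using f_eq[symmetric] by blast
  qed
  moreover have "subobj_le C (u\<^sup>\<dagger>) m" if m: "is_mono C m" "factors_through C f m" for m
  proof -
    obtain w where w: "w \<in> Arr C" "Dom C w = Dom C f" "Cod C w = Dom C m" "m \<cdot> w = f"
      and "Cod C m = Cod C f"
      using m(2) unfolding factors_through_def in_hom_iff by blast
    have "m \<in> Arr C"
      using m(1) unfolding is_mono_def by blast
    then have "m \<cdot> (w \<cdot> c) = (m \<cdot> w) \<cdot> c"
      using w(1-3) f by simp
    then have "m \<cdot> (w \<cdot> c) = u\<^sup>\<dagger>"
      using fc w(4) by simp
    moreover have "w \<cdot> c \<in> hom C (Dom C (u\<^sup>\<dagger>)) (Dom C m)" "Cod C (u\<^sup>\<dagger>) = Cod C m"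
      using w(1-3) f \<open>Cod C m = Cod C f\<close> by (simp_all add: in_hom_iff)
    ultimately show ?thesis
      unfolding subobj_le_def by blast
  qed
  ultimately show ?thesis
    using that f unfolding is_range_def by blast
qed

lemma range_in_Arr:
  assumes "is_range C f r"
  shows "r \<in> Arr C" "Cod C r = Cod C f"
proof -
  have "is_mono C r" "factors_through C f r"
    using assms unfolding is_range_def by auto
  then show "r \<in> Arr C" "Cod C r = Cod C f"
    unfolding is_mono_def factors_through_def by auto
qed

lemma range_ker_adj:
  assumes r: "is_range C f r"
  shows "ker_le (r\<^sup>\<dagger>) (f\<^sup>\<dagger>)" "ker_le (f\<^sup>\<dagger>) (r\<^sup>\<dagger>)"
proof -
  have f: "f \<in> Arr C" and "factors_through C f r"
    and least: "\<And>m. is_mono C m \<Longrightarrow> factors_through C f m \<Longrightarrow> subobj_le C r m"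
    using r unfolding is_range_def by auto
  then obtain u where u: "u \<in> Arr C" "Dom C u = Dom C f" "Cod C u = Dom C r" "r \<cdot> u = f"
    unfolding factors_through_def in_hom_iff by blast
  have "u\<^sup>\<dagger> \<cdot> r\<^sup>\<dagger> = (r \<cdot> u)\<^sup>\<dagger>"
    using u(1-3) range_in_Arr[OF r] by simp
  then have "f\<^sup>\<dagger> = u\<^sup>\<dagger> \<cdot> r\<^sup>\<dagger>"
    using u(4) by simp
  then show "ker_le (r\<^sup>\<dagger>) (f\<^sup>\<dagger>)"
    using ker_le_comp[of "r\<^sup>\<dagger>" "u\<^sup>\<dagger>"] u range_in_Arr[OF r] by simp
  obtain p q v where "ran_factorization C f p q v"
    using ran_factorization_exists f by blast
  then interpret F: ran_factorization C f p q v .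
  have "v \<in> hom C (Dom C f) (Dom C q)" "Cod C q = Cod C f"
    by (simp_all add: in_hom_iff)
  then have "factors_through C f q"
    unfolding factors_through_def using F.factorization by blast
  then have "subobj_le C r q"
    using least isometry_mono[OF F.closure_isometry] by blast
  then have "ker_le (q\<^sup>\<dagger>) (r\<^sup>\<dagger>)"
    using ker_le_adj_if_subobj_le range_in_Arr(1)[OF r] F.in_Arr(3) by blast
  then show "ker_le (f\<^sup>\<dagger>) (r\<^sup>\<dagger>)"
    using ker_le_trans[OF F.ker_adj_le_ker_closure_adj] by simp
qed

lemma ker_ge_ran_perp_iff:
  assumes f: "f \<in> Arr C" and h: "h \<in> Arr C" "Dom C h = Cod C f"
  shows "ker_ge_ran_perp C h f \<longleftrightarrow> ker_le (f\<^sup>\<dagger>) h"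
proof
  assume ge: "ker_ge_ran_perp C h f"
  obtain r where r: "is_range C f r"
    using range_exists f by blast
  obtain p where p: "is_kernel C (r\<^sup>\<dagger>) p"
    using isometric_kernel_exists[of "r\<^sup>\<dagger>"] range_in_Arr[OF r] by auto
  obtain k where k: "is_kernel C h k"
    using isometric_kernel_exists h by blast
  have "subobj_le C p k"
    using ge k r p unfolding ker_ge_ran_perp_def is_perp_def by blast
  then have "ker_le (r\<^sup>\<dagger>) h"
    using kernel_subobj_le_iff[OF p k] range_in_Arr[OF r] h by simp
  then show "ker_le (f\<^sup>\<dagger>) h"
    using ker_le_trans[OF range_ker_adj(2)[OF r]] range_in_Arr[OF r] f by simp
next
  assume le: "ker_le (f\<^sup>\<dagger>) h"
  show "ker_ge_ran_perp C h f"
    unfolding ker_ge_ran_perp_def is_perp_def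
  proof (intro allI impI)
    fix k r p
    assume k: "is_kernel C h k" and r: "is_range C f r" and p: "is_kernel C (r\<^sup>\<dagger>) p"
    have "ker_le (r\<^sup>\<dagger>) h"
      using ker_le_trans[OF range_ker_adj(1)[OF r] le] range_in_Arr[OF r] f by simp
    then show "subobj_le C p k"
      using kernel_subobj_le_iff[OF p k] range_in_Arr[OF r] h by simp
  qed
qed

lemma ker_le_ran_perp_iff:
  assumes f: "f \<in> Arr C" and h: "h \<in> Arr C" "Dom C h = Cod C f"
  shows "ker_le_ran_perp C h f \<longleftrightarrow> ker_le h (f\<^sup>\<dagger>)"
proof
  assume le: "ker_le_ran_perp C h f"
  obtain r where r: "is_range C f r"
    using range_exists f by blast
  obtain p where p: "is_kernel C (r\<^sup>\<dagger>) p"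
    using isometric_kernel_exists[of "r\<^sup>\<dagger>"] range_in_Arr[OF r] by auto
  obtain k where k: "is_kernel C h k"
    using isometric_kernel_exists h by blast
  have "subobj_le C k p"
    using le k r p unfolding ker_le_ran_perp_def is_perp_def by blast
  then have "ker_le h (r\<^sup>\<dagger>)"
    using kernel_subobj_le_iff[OF k p] range_in_Arr[OF r] h by simp
  then show "ker_le h (f\<^sup>\<dagger>)"
    using ker_le_trans[OF _ range_ker_adj(1)[OF r]] range_in_Arr[OF r] h by simp
next
  assume le: "ker_le h (f\<^sup>\<dagger>)"
  show "ker_le_ran_perp C h f"
    unfolding ker_le_ran_perp_def is_perp_def
  proof (intro allI impI)
    fix k r p
    assume k: "is_kernel C h k" and r: "is_range C f r" and p: "is_kernel C (r\<^sup>\<dagger>) p"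
    have "ker_le h (r\<^sup>\<dagger>)"
      using ker_le_trans[OF le range_ker_adj(2)[OF r]] f h by simp
    then show "subobj_le C k p"
      using kernel_subobj_le_iff[OF k p] range_in_Arr[OF r] h by simp
  qed
qed

lemma ran_perpperp_eq_if_ker_adj_eq:
  assumes h: "h \<in> Arr C" and g: "g \<in> Arr C" "Cod C g = Cod C h"
    and hg: "ker_le (h\<^sup>\<dagger>) (g\<^sup>\<dagger>)" and gh: "ker_le (g\<^sup>\<dagger>) (h\<^sup>\<dagger>)"
  shows "ran_perpperp_eq C h g"
  unfolding ran_perpperp_eq_def is_perp_def
proof (intro allI impI)
  fix r1 p1 q1 r2 p2 q2
  assume r1: "is_range C h r1" and p1: "is_kernel C (r1\<^sup>\<dagger>) p1" and q1: "is_kernel C (p1\<^sup>\<dagger>) q1"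
    and r2: "is_range C g r2" and p2: "is_kernel C (r2\<^sup>\<dagger>) p2" and q2: "is_kernel C (p2\<^sup>\<dagger>) q2"
  note r_arr = range_in_Arr[OF r1] range_in_Arr[OF r2]
  have p_arr: "p1 \<in> Arr C" "Cod C p1 = Cod C h" "p2 \<in> Arr C" "Cod C p2 = Cod C h"
    using kernelD[OF p1] kernelD[OF p2] r_arr g by auto
  have "ker_le (r1\<^sup>\<dagger>) (r2\<^sup>\<dagger>)"
    using ker_le_trans[OF ker_le_trans[OF range_ker_adj(1)[OF r1] hg] range_ker_adj(2)[OF r2]]
      r_arr h g by simp
  moreover have "ker_le (r2\<^sup>\<dagger>) (r1\<^sup>\<dagger>)"
    using ker_le_trans[OF ker_le_trans[OF range_ker_adj(1)[OF r2] gh] range_ker_adj(2)[OF r1]]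
      r_arr h g by simp
  ultimately have "subobj_le C p1 p2" "subobj_le C p2 p1"
    using kernel_subobj_le_iff[OF p1 p2] kernel_subobj_le_iff[OF p2 p1] r_arr g by simp_all
  then have "ker_le (p2\<^sup>\<dagger>) (p1\<^sup>\<dagger>)" "ker_le (p1\<^sup>\<dagger>) (p2\<^sup>\<dagger>)"
    using ker_le_adj_if_subobj_le p_arr by blast+
  then show "subobj_eq C q1 q2"
    unfolding subobj_eq_def
    using kernel_subobj_le_iff[OF q1 q2] kernel_subobj_le_iff[OF q2 q1] p_arr by simp
qed

end

section \<open>Extensions along a morphism\<close>

context pre_hilbert_star_category
begin

lemma adj_square_eq_if_isometry:
  assumes iso: "is_isometry C h" and f: "f \<in> Arr C" "Dom C h = Cod C f"
  shows "f\<^sup>\<dagger> \<cdot> f = (h \<cdot> f)\<^sup>\<dagger> \<cdot> (h \<cdot> f)"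
  using isometry_cancel[OF iso] isometryD[OF iso] f by simp

lemma partial_isometry_fixes_closure:
  assumes pi: "is_partial_isometry C h" and "ran_factorization C (h\<^sup>\<dagger>) k c u"
  shows "h\<^sup>\<dagger> \<cdot> (h \<cdot> c) = c"
proof -
  interpret R: ran_factorization C "h\<^sup>\<dagger>" k c u by fact
  have h: "h \<in> Arr C" "h \<cdot> (h\<^sup>\<dagger> \<cdot> h) = h"
    using pi unfolding is_partial_isometry_def by auto
  have "h\<^sup>\<dagger> = (h \<cdot> (h\<^sup>\<dagger> \<cdot> h))\<^sup>\<dagger>"
    using h by simp
  also have "\<dots> = h\<^sup>\<dagger> \<cdot> (h \<cdot> h\<^sup>\<dagger>)"
    using h(1) by simp
  finally have "c \<cdot> u = c \<cdot> ((u \<cdot> (h \<cdot> c)) \<cdot> u)"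
    unfolding R.factorization[symmetric] using h(1) by simp
  then have "u = (u \<cdot> (h \<cdot> c)) \<cdot> u"
    by (rule mono_cancel[OF isometry_mono[OF R.closure_isometry], rotated -1]) (use h(1) in simp_all)
  then have "(u \<cdot> (h \<cdot> c)) \<cdot> u = Idm C (Dom C c) \<cdot> u"
    using h(1) by simp
  then have "u \<cdot> (h \<cdot> c) = Idm C (Dom C c)"
    by (rule epi_cancel[OF R.factor_epi, rotated -1]) (use h(1) in simp_all)
  then have "c \<cdot> (u \<cdot> (h \<cdot> c)) = c"
    by simp
  then show ?thesis
    unfolding R.factorization[symmetric] using h(1) by simp
qed

text \<open>\<open>h\<^sup>\<dagger> \<cdot> h\<close> is the projection onto \<open>(Ker h)\<^sup>\<bottom>\<close>, which contains \<open>Ran f\<close>; the identity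
  \<open>f\<^sup>\<dagger> \<cdot> h\<^sup>\<dagger> \<cdot> h = f\<^sup>\<dagger>\<close> is checked on the jointly epic pair \<open>k\<close>, \<open>c\<close> formed by the kernel
  of \<open>h\<close> and its complement.\<close>

lemma adj_square_eq_if_partial_isometry:
  assumes pi: "is_partial_isometry C h" and f: "f \<in> Arr C" "Dom C h = Cod C f"
    and le: "ker_le h (f\<^sup>\<dagger>)"
  shows "f\<^sup>\<dagger> \<cdot> f = (h \<cdot> f)\<^sup>\<dagger> \<cdot> (h \<cdot> f)"
proof -
  have h: "h \<in> Arr C"
    using pi unfolding is_partial_isometry_def by blast
  obtain k c u where P: "ran_factorization C (h\<^sup>\<dagger>) k c u"
    using ran_factorization_exists[of "h\<^sup>\<dagger>"] h by auto
  interpret R: ran_factorization C "h\<^sup>\<dagger>" k c u by (fact P)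
  have hk: "is_zero (h \<cdot> k)"
    using R.adj_comp_perp_zero h by simp
  have "f\<^sup>\<dagger> \<cdot> (h\<^sup>\<dagger> \<cdot> h) = f\<^sup>\<dagger>"
  proof (rule R.jointly_epi)
    have "is_zero (f\<^sup>\<dagger> \<cdot> k)"
      using ker_leD[OF le _ _ hk] h f by simp
    moreover have "is_zero ((f\<^sup>\<dagger> \<cdot> h\<^sup>\<dagger>) \<cdot> (h \<cdot> k))"
      using zero_comp_left[OF hk, of "f\<^sup>\<dagger> \<cdot> h\<^sup>\<dagger>"] h f by simp
    ultimately show "(f\<^sup>\<dagger> \<cdot> (h\<^sup>\<dagger> \<cdot> h)) \<cdot> k = f\<^sup>\<dagger> \<cdot> k"
      using zero_unique h f by simp
    show "(f\<^sup>\<dagger> \<cdot> (h\<^sup>\<dagger> \<cdot> h)) \<cdot> c = f\<^sup>\<dagger> \<cdot> c"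
      using partial_isometry_fixes_closure[OF pi P] h f by simp
  qed (use h f in simp_all)
  moreover have "(h \<cdot> f)\<^sup>\<dagger> \<cdot> (h \<cdot> f) = (f\<^sup>\<dagger> \<cdot> (h\<^sup>\<dagger> \<cdot> h)) \<cdot> f"
    using h f by simp
  ultimately show ?thesis
    by simp
qed

lemma unitary_if_isometry_comp_epi:
  assumes iso: "is_isometry C h" and f: "f \<in> Arr C" "Dom C h = Cod C f"
    and epi: "is_epi C (h \<cdot> f)"
  shows "is_unitary C h"
proof -
  have h: "h \<in> Arr C"
    using isometryD[OF iso] by blast
  have "(h \<cdot> h\<^sup>\<dagger>) \<cdot> (h \<cdot> f) = Idm C (Cod C h) \<cdot> (h \<cdot> f)"
    using isometry_cancel[OF iso] h f by simp
  then have "h \<cdot> h\<^sup>\<dagger> = Idm C (Cod C h)"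
    by (rule epi_cancel[OF epi, rotated -1]) (use h f in simp_all)
  moreover have "h\<^sup>\<dagger> \<in> hom C (Cod C h) (Dom C h)"
    using h by (simp add: in_hom_iff)
  ultimately show ?thesis
    unfolding is_unitary_def is_iso_def using iso isometryD[OF iso] by blast
qed

end

context ran_factorization
begin

lemma ker_ge_ran_perp_iff_zero_on_perp:
  assumes "h \<in> Arr C" "Dom C h = Cod C f"
  shows "ker_ge_ran_perp C h f \<longleftrightarrow> is_zero (h \<cdot> p)"
  using ker_ge_ran_perp_iff ker_le_iff_zero_comp_kernel[OF perp_kernel] assms by simp

lemma comp_closure_proj_eq:
  assumes h: "h \<in> Arr C" "Dom C h = Cod C f" and hp: "is_zero (h \<cdot> p)"
  shows "h \<cdot> (q \<cdot> q\<^sup>\<dagger>) = h"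
proof (rule jointly_epi)
  have "is_zero ((h \<cdot> q) \<cdot> (q\<^sup>\<dagger> \<cdot> p))"
    using zero_comp_left[OF closure_adj_comp_perp_zero, of "h \<cdot> q"] h by simp
  then show "(h \<cdot> (q \<cdot> q\<^sup>\<dagger>)) \<cdot> p = h \<cdot> p"
    using zero_unique[OF _ hp] h by simp
  show "(h \<cdot> (q \<cdot> q\<^sup>\<dagger>)) \<cdot> q = h \<cdot> q"
    using isometryD[OF closure_isometry] h by simp
qed (use h in simp_all)

lemma canonical_extension:
  assumes e: "e \<in> Arr C" "Dom C e = Cod C f"
  shows "(e \<cdot> (q \<cdot> q\<^sup>\<dagger>)) \<cdot> f = e \<cdot> f" "is_zero ((e \<cdot> (q \<cdot> q\<^sup>\<dagger>)) \<cdot> p)"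
  using closure_proj_fixes zero_comp_left[OF closure_adj_comp_perp_zero, of "e \<cdot> q"] e by simp_all

lemma extension_unique:
  assumes h1: "h1 \<in> Arr C" "Dom C h1 = Cod C f" "is_zero (h1 \<cdot> p)"
    and h2: "h2 \<in> Arr C" "Dom C h2 = Cod C f" "is_zero (h2 \<cdot> p)" "Cod C h2 = Cod C h1"
    and eq: "h1 \<cdot> f = h2 \<cdot> f"
  shows "h1 = h2"
proof (rule jointly_epi)
  show "h1 \<cdot> p = h2 \<cdot> p"
    using zero_unique[OF h1(3) h2(3)] h1 h2 by simp
  have "(h1 \<cdot> q) \<cdot> v = (h2 \<cdot> q) \<cdot> v"
    using eq h1 h2 factorization by simp
  then show "h1 \<cdot> q = h2 \<cdot> q"
    by (rule epi_cancel[OF factor_epi, rotated -1]) (use h1 h2 in simp_all)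
qed (use h1 h2 in simp_all)

lemma ker_adj_comp_le_ker_adj:
  assumes h: "h \<in> Arr C" "Dom C h = Cod C f" and hp: "is_zero (h \<cdot> p)"
  shows "ker_le ((h \<cdot> f)\<^sup>\<dagger>) (h\<^sup>\<dagger>)"
proof (rule ker_leI)
  fix w
  assume w: "w \<in> Arr C" "Cod C w = Dom C ((h \<cdot> f)\<^sup>\<dagger>)" and "is_zero ((h \<cdot> f)\<^sup>\<dagger> \<cdot> w)"
  then have "is_zero (f\<^sup>\<dagger> \<cdot> (h\<^sup>\<dagger> \<cdot> w))"
    using h by simp
  then obtain t where t: "t \<in> Arr C" "Cod C t = Dom C p" "p \<cdot> t = h\<^sup>\<dagger> \<cdot> w"
    using kernel_factor[OF perp_kernel, of "h\<^sup>\<dagger> \<cdot> w"] h w by auto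
  then have "t = (h \<cdot> p)\<^sup>\<dagger> \<cdot> w"
    using isometry_cancel[OF perp_isometry, of t] h w by simp
  then have "is_zero t"
    using zero_comp_right[OF zero_adj[OF hp], of w] h w by simp
  then show "is_zero (h\<^sup>\<dagger> \<cdot> w)"
    using zero_comp_left[of t p] t by simp
qed

text \<open>With \<open>M = (h \<cdot> q)\<^sup>\<dagger> \<cdot> (h \<cdot> q)\<close> the hypothesis reads \<open>v\<^sup>\<dagger> \<cdot> v = v\<^sup>\<dagger> \<cdot> M \<cdot> v\<close>; cancelling the
  epimorphism \<open>v\<close> twice, with \<open>M\<close> self-adjoint in between, gives \<open>M = 1\<close>.\<close>

lemma isometry_comp_closure_if_adj_square_eq:
  assumes h: "h \<in> Arr C" "Dom C h = Cod C f"
    and sq: "f\<^sup>\<dagger> \<cdot> f = (h \<cdot> f)\<^sup>\<dagger> \<cdot> (h \<cdot> f)"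
  shows "is_isometry C (h \<cdot> q)"
proof -
  define M where "M = (h \<cdot> q)\<^sup>\<dagger> \<cdot> (h \<cdot> q)"
  have M: "M \<in> Arr C" "Dom C M = Dom C q" "Cod C M = Dom C q" "M\<^sup>\<dagger> = M"
    unfolding M_def using h by simp_all
  have "f\<^sup>\<dagger> \<cdot> f = v\<^sup>\<dagger> \<cdot> v" "(h \<cdot> f)\<^sup>\<dagger> \<cdot> (h \<cdot> f) = v\<^sup>\<dagger> \<cdot> (M \<cdot> v)"
    unfolding M_def factorization[symmetric] using isometry_cancel[OF closure_isometry] h by simp_all
  then have "v\<^sup>\<dagger> \<cdot> v = (v\<^sup>\<dagger> \<cdot> M) \<cdot> v"
    using sq M by simp
  then have "v\<^sup>\<dagger> = v\<^sup>\<dagger> \<cdot> M"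
    by (rule epi_cancel[OF factor_epi, rotated -1]) (use M in simp_all)
  then have "(v\<^sup>\<dagger>)\<^sup>\<dagger> = (v\<^sup>\<dagger> \<cdot> M)\<^sup>\<dagger>"
    by (rule arg_cong)
  then have "M \<cdot> v = Idm C (Dom C q) \<cdot> v"
    using M by simp
  then have "M = Idm C (Dom C q)"
    by (rule epi_cancel[OF factor_epi, rotated -1]) (use M in simp_all)
  then show ?thesis
    unfolding is_isometry_def M_def using h by simp
qed

lemma adj_comp_self_eq_closure_proj:
  assumes h: "h \<in> Arr C" "Dom C h = Cod C f"
    and hp: "is_zero (h \<cdot> p)" and iso: "is_isometry C (h \<cdot> q)"
  shows "h\<^sup>\<dagger> \<cdot> h = q \<cdot> q\<^sup>\<dagger>"
proof -
  define k where "k = h \<cdot> q"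
  have k: "k \<in> Arr C" "Dom C k = Dom C q" "k\<^sup>\<dagger> \<cdot> k = Idm C (Dom C q)"
    using isometryD[OF iso] h unfolding k_def by simp_all
  have "h = k \<cdot> q\<^sup>\<dagger>"
    using comp_closure_proj_eq[OF h hp] h unfolding k_def by simp
  then have "h\<^sup>\<dagger> \<cdot> h = (k \<cdot> q\<^sup>\<dagger>)\<^sup>\<dagger> \<cdot> (k \<cdot> q\<^sup>\<dagger>)"
    by simp
  also have "\<dots> = q \<cdot> ((k\<^sup>\<dagger> \<cdot> k) \<cdot> q\<^sup>\<dagger>)"
    using k(1,2) by simp
  also have "\<dots> = q \<cdot> q\<^sup>\<dagger>"
    unfolding k(3) by simp
  finally show ?thesis .
qed

lemma partial_isometry_if_isometric_on_closure:
  assumes h: "h \<in> Arr C" "Dom C h = Cod C f"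
    and hp: "is_zero (h \<cdot> p)" and iso: "is_isometry C (h \<cdot> q)"
  shows "is_partial_isometry C h" "ker_le h (f\<^sup>\<dagger>)"
proof -
  note hh = adj_comp_self_eq_closure_proj[OF h hp iso]
  show "is_partial_isometry C h"
    unfolding is_partial_isometry_def hh using comp_closure_proj_eq[OF h hp] h by simp
  have "ker_le h (q\<^sup>\<dagger>)"
  proof (rule ker_leI)
    fix w
    assume w: "w \<in> Arr C" "Cod C w = Dom C h" and "is_zero (h \<cdot> w)"
    then have "is_zero (q\<^sup>\<dagger> \<cdot> (h\<^sup>\<dagger> \<cdot> (h \<cdot> w)))"
      using zero_comp_left[of "h \<cdot> w" "q\<^sup>\<dagger> \<cdot> h\<^sup>\<dagger>"] h by simp
    moreover have "q\<^sup>\<dagger> \<cdot> (h\<^sup>\<dagger> \<cdot> (h \<cdot> w)) = q\<^sup>\<dagger> \<cdot> ((h\<^sup>\<dagger> \<cdot> h) \<cdot> w)"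
      using h w by simp
    ultimately show "is_zero (q\<^sup>\<dagger> \<cdot> w)"
      unfolding hh using isometry_cancel[OF closure_isometry] h w by simp
  qed
  then show "ker_le h (f\<^sup>\<dagger>)"
    using ker_le_trans[OF _ ker_closure_adj_le_ker_adj] h by simp
qed

lemma closure_proj_eq_Idm_if_epi:
  assumes epi: "is_epi C f"
  shows "q \<cdot> q\<^sup>\<dagger> = Idm C (Cod C f)"
  by (rule epi_cancel[OF epi]) (use closure_proj_fixes in simp_all)

lemma ex1_extension:
  assumes e: "is_extension C f g e"
  shows "\<exists>!h. is_extension C f g h \<and> ker_ge_ran_perp C h f"
proof -
  have ext_iff: "is_extension C f g h \<longleftrightarrow>
      h \<in> Arr C \<and> Dom C h = Cod C f \<and> Cod C h = Cod C g \<and> h \<cdot> f = g" for h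
    unfolding is_extension_def in_hom_iff by auto
  have ext_ge_iff: "is_extension C f g h \<and> ker_ge_ran_perp C h f \<longleftrightarrow>
      is_extension C f g h \<and> is_zero (h \<cdot> p)" for h
    using ker_ge_ran_perp_iff_zero_on_perp ext_iff by blast
  have e_arr: "e \<in> Arr C" "Dom C e = Cod C f" "Cod C e = Cod C g" "e \<cdot> f = g"
    using e ext_iff by auto
  have "is_extension C f g (e \<cdot> (q \<cdot> q\<^sup>\<dagger>)) \<and> is_zero ((e \<cdot> (q \<cdot> q\<^sup>\<dagger>)) \<cdot> p)"
    unfolding ext_iff using canonical_extension[OF e_arr(1,2)] e_arr by simp
  moreover have "h1 = h2"
    if "is_extension C f g h1" "is_zero (h1 \<cdot> p)" "is_extension C f g h2" "is_zero (h2 \<cdot> p)"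
    for h1 h2
    using extension_unique that unfolding ext_iff by simp
  ultimately show ?thesis
    unfolding ext_ge_iff by blast
qed

lemma extension_properties:
  assumes ext: "is_extension C f g h" and ge: "ker_ge_ran_perp C h f"
  shows "ran_perpperp_eq C h g"
    and "f\<^sup>\<dagger> \<cdot> f = g\<^sup>\<dagger> \<cdot> g \<longleftrightarrow> is_partial_isometry C h \<and> ker_le_ran_perp C h f"
    and "is_epi C f \<Longrightarrow> f\<^sup>\<dagger> \<cdot> f = g\<^sup>\<dagger> \<cdot> g \<longleftrightarrow> is_isometry C h"
    and "is_epi C f \<Longrightarrow> is_epi C g \<Longrightarrow> f\<^sup>\<dagger> \<cdot> f = g\<^sup>\<dagger> \<cdot> g \<longleftrightarrow> is_unitary C h"
proof -
  have h: "h \<in> Arr C" "Dom C h = Cod C f" "Cod C h = Cod C g" and g: "g = h \<cdot> f"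
    using ext unfolding is_extension_def in_hom_iff by auto
  have hp: "is_zero (h \<cdot> p)"
    using ge ker_ge_ran_perp_iff_zero_on_perp[OF h(1,2)] by simp
  have "ker_le (h\<^sup>\<dagger>) ((h \<cdot> f)\<^sup>\<dagger>)"
    using ker_le_comp[of "h\<^sup>\<dagger>" "f\<^sup>\<dagger>"] h by simp
  then show "ran_perpperp_eq C h g"
    unfolding g using ran_perpperp_eq_if_ker_adj_eq ker_adj_comp_le_ker_adj[OF h(1,2) hp] h by simp
  have isometric_on_closure: "is_isometry C (h \<cdot> q)" if "f\<^sup>\<dagger> \<cdot> f = g\<^sup>\<dagger> \<cdot> g"
    using isometry_comp_closure_if_adj_square_eq[OF h(1,2)] that unfolding g .
  show "f\<^sup>\<dagger> \<cdot> f = g\<^sup>\<dagger> \<cdot> g \<longleftrightarrow> is_partial_isometry C h \<and> ker_le_ran_perp C h f"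
    unfolding ker_le_ran_perp_iff[OF in_Arr(1) h(1,2)]
  proof
    assume "f\<^sup>\<dagger> \<cdot> f = g\<^sup>\<dagger> \<cdot> g"
    then show "is_partial_isometry C h \<and> ker_le h (f\<^sup>\<dagger>)"
      using partial_isometry_if_isometric_on_closure[OF h(1,2) hp] isometric_on_closure by blast
  next
    assume "is_partial_isometry C h \<and> ker_le h (f\<^sup>\<dagger>)"
    then show "f\<^sup>\<dagger> \<cdot> f = g\<^sup>\<dagger> \<cdot> g"
      unfolding g using adj_square_eq_if_partial_isometry in_Arr(1) h(2) by blast
  qed
  show iso: "f\<^sup>\<dagger> \<cdot> f = g\<^sup>\<dagger> \<cdot> g \<longleftrightarrow> is_isometry C h" if epi: "is_epi C f"
  proof
    assume "f\<^sup>\<dagger> \<cdot> f = g\<^sup>\<dagger> \<cdot> g"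
    then have "h\<^sup>\<dagger> \<cdot> h = q \<cdot> q\<^sup>\<dagger>"
      using adj_comp_self_eq_closure_proj[OF h(1,2) hp] isometric_on_closure by blast
    also have "\<dots> = Idm C (Dom C h)"
      using closure_proj_eq_Idm_if_epi[OF epi] h(2) by simp
    finally show "is_isometry C h"
      unfolding is_isometry_def using h(1) by blast
  next
    assume "is_isometry C h"
    then show "f\<^sup>\<dagger> \<cdot> f = g\<^sup>\<dagger> \<cdot> g"
      unfolding g using adj_square_eq_if_isometry in_Arr(1) h(2) by blast
  qed
  show "f\<^sup>\<dagger> \<cdot> f = g\<^sup>\<dagger> \<cdot> g \<longleftrightarrow> is_unitary C h" if epi: "is_epi C f" "is_epi C g"
  proof
    assume "f\<^sup>\<dagger> \<cdot> f = g\<^sup>\<dagger> \<cdot> g"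
    then have "is_isometry C h"
      using iso[OF epi(1)] by blast
    then show "is_unitary C h"
      using unitary_if_isometry_comp_epi in_Arr(1) h(2) epi(2) unfolding g by blast
  next
    assume "is_unitary C h"
    then show "f\<^sup>\<dagger> \<cdot> f = g\<^sup>\<dagger> \<cdot> g"
      using iso[OF epi(1)] unfolding is_unitary_def by blast
  qed
qed

end

theorem proposition7p8:
  fixes C :: "('o, 'm) starcat" and f g :: 'm
  assumes "is_pre_hilbert_star_category C"
    and "f \<in> Arr C" and "g \<in> Arr C" and "Dom C f = Dom C g"
    and "\<exists>e. is_extension C f g e"
  shows "(\<exists>!h. is_extension C f g h \<and> ker_ge_ran_perp C h f) \<and>
    (\<forall>h. is_extension C f g h \<and> ker_ge_ran_perp C h f \<longrightarrow>
       ran_perpperp_eq C h g \<and>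
       (Comp C (Star C f) f = Comp C (Star C g) g \<longleftrightarrow>
          is_partial_isometry C h \<and> ker_le_ran_perp C h f) \<and>
       (is_epi C f \<longrightarrow> (Comp C (Star C f) f = Comp C (Star C g) g \<longleftrightarrow> is_isometry C h)) \<and>
       (is_epi C f \<and> is_epi C g \<longrightarrow>
          (Comp C (Star C f) f = Comp C (Star C g) g \<longleftrightarrow> is_unitary C h)))"
proof -
  interpret pre_hilbert_star_category C
    by (rule pre_hilbert_star_category.intro) (fact assms(1))
  obtain p q v where "ran_factorization C f p q v"
    using ran_factorization_exists assms(2) by blast
  then interpret F: ran_factorization C f p q v .
  obtain e where e: "is_extension C f g e"
    using assms(5) by blast
  have "ran_perpperp_eq C h g \<and>
      (f\<^sup>\<dagger> \<cdot> f = g\<^sup>\<dagger> \<cdot> g \<longleftrightarrow> is_partial_isometry C h \<and> ker_le_ran_perp C h f) \<and>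
      (is_epi C f \<longrightarrow> (f\<^sup>\<dagger> \<cdot> f = g\<^sup>\<dagger> \<cdot> g \<longleftrightarrow> is_isometry C h)) \<and>
      (is_epi C f \<and> is_epi C g \<longrightarrow> (f\<^sup>\<dagger> \<cdot> f = g\<^sup>\<dagger> \<cdot> g \<longleftrightarrow> is_unitary C h))"
    if "is_extension C f g h" "ker_ge_ran_perp C h f" for h
    using F.extension_properties[OF that] by simp
  then show ?thesis
    using F.ex1_extension[OF e] by simp
qed

end
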